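(* Let $\alpha,\beta,\gamma\in\mathbb{R}$, $c,a\in\mathbb{R}$ with $ca>\max\{\gamma,0\}$, and $r>0$. Let $g(x,y)=c^2a^2-ca\gamma+ca\alpha x^2+3ca\beta y^2-\alpha^2x^2y^2$, $C=\{(x,y)\in\mathbb{R}^2:g(x,y)>0\}$, and $R=\{(x,y):x^2+y^2\le r^2\}$. Then $R\subseteq C$ in each of the following four cases: (1) $\alpha=0$ and $3\beta r^2>\gamma-ca$; (2) $\alpha\neq0$, $\alpha>3\beta$, $r^2\le\frac{ca\alpha-3ca\beta}{\alpha^2}$, and $3\beta r^2>\gamma-ca$; (3) $\alpha\neq0$, $\alpha<3\beta$, $r^2\le\frac{3ca\beta-ca\alpha}{\alpha^2}$, and $\alpha r^2>\gamma-ca$; (4) $3ca\alpha\beta+\alpha^2(ca-\gamma)>0$, $r^2\ge\max\Big\{\frac{ca\alpha-3ca\beta}{\alpha^2},\frac{3ca\beta-ca\alpha}{\alpha^2}\Big\}$, and $$\frac{ca\alpha+3ca\beta-2\sqrt{3c^2a^2\alpha\beta+\alpha^2ca(ca-\gamma)}}{\alpha^2}<r^2<\frac{ca\alpha+3ca\beta+2\sqrt{3c^2a^2\alpha\beta+\alpha^2ca(ca-\gamma)}}{\alpha^2}.$$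
   Context: The set $C$ is the contraction region (for $\omega^2=1$, identical couplings $a_j=b_j=a$) of the virtual system of the all-to-all coupled Rayleigh van der Pol network. *)

theory Defs
  imports Complex_Main
begin

definition gfun :: "real \<Rightarrow> real \<Rightarrow> real \<Rightarrow> real \<Rightarrow> real \<Rightarrow> real \<Rightarrow> real \<Rightarrow> real" where
  "gfun \<alpha> \<beta> \<gamma> c a x y =
     c^2 * a^2 - c * a * \<gamma> + c * a * \<alpha> * x^2 + 3 * c * a * \<beta> * y^2 - \<alpha>^2 * x^2 * y^2"

definition Cset :: "real \<Rightarrow> real \<Rightarrow> real \<Rightarrow> real \<Rightarrow> real \<Rightarrow> (real \<times> real) set" where
  "Cset \<alpha> \<beta> \<gamma> c a = {(x, y). gfun \<alpha> \<beta> \<gamma> c a x y > 0}"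

definition Rset :: "real \<Rightarrow> (real \<times> real) set" where
  "Rset r = {(x, y). x^2 + y^2 \<le> r^2}"

end

theory Submission
  imports Defs
begin

text \<open>With \<open>k = c a\<close>, \<open>X = x\<^sup>2\<close>, \<open>Y = y\<^sup>2\<close>, the function \<open>g\<close> is the bilinear polynomial
  \<open>k (k - \<gamma>) + k \<alpha> X + 3 k \<beta> Y - \<alpha>\<^sup>2 X Y\<close>, and the disc \<open>R\<close> becomes the simplex
  \<open>X, Y \<ge> 0, X + Y \<le> r\<^sup>2\<close>. In the first three cases \<open>g\<close> splits into a term that is affine in
  \<open>X + Y\<close> (positive at both ends of \<open>[0, r\<^sup>2]\<close>) plus a product of nonnegative factors. In the
  fourth case \<open>\<alpha>\<^sup>2 g = D - u v\<close> with \<open>u = \<alpha>\<^sup>2 X - 3 k \<beta>\<close>, \<open>v = \<alpha>\<^sup>2 Y - k \<alpha>\<close>; when \<open>u, v > 0\<close>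
  the upper bound on \<open>r\<^sup>2\<close> gives \<open>u + v < 2 \<surd>D\<close>, hence \<open>u v < D\<close> by AM-GM, and when
  \<open>u, v < 0\<close> the product is at most \<open>3 k\<^sup>2 \<alpha> \<beta> < D\<close>.\<close>

lemma affine_pos_on_interval:
  fixes p q s t :: real
  assumes "0 < p" and "0 < p + q * s" and "0 \<le> t" and "t \<le> s"
  shows "0 < p + q * t"
proof (cases "q \<ge> 0")
  case True
  then show ?thesis using assms by (simp add: add_pos_nonneg)
next
  case False
  then have "q * s \<le> q * t" using assms by (simp add: mult_left_mono_neg)
  then show ?thesis using assms by linarith
qed

lemma bilinear_pos_on_simplex:
  fixes k p a b m s X Y :: real
  assumes "0 < k" and "0 < p" and "0 \<le> X" and "0 \<le> Y" and "X + Y \<le> s"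
    and "0 \<le> m" and "m * s \<le> k * (a - b)" and "0 < p + b * s"
  shows "0 < k * p + k * a * X + k * b * Y - m * X * Y"
proof -
  have "0 < p + b * (X + Y)"
    using affine_pos_on_interval assms by simp
  then have affine_part: "0 < k * (p + b * (X + Y))"
    using \<open>0 < k\<close> by simp
  have "m * Y \<le> m * s"
    using assms by (simp add: mult_left_mono)
  then have "0 \<le> X * (k * (a - b) - m * Y)"
    using assms by simp
  with affine_part show ?thesis
    by (simp add: algebra_simps)
qed

lemma mult_lt_of_add_lt_two_sqrt:
  fixes u v D :: real
  assumes "0 < u" and "0 < v" and "u + v < 2 * sqrt D"
  shows "u * v < D"
proof -
  have "0 < sqrt D"
    using assms by linarith
  have "(u + v)\<^sup>2 < (2 * sqrt D)\<^sup>2"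
    using assms by (intro power_strict_mono) auto
  with \<open>0 < sqrt D\<close> have "(u + v)\<^sup>2 < 4 * D"
    by (simp add: power_mult_distrib)
  moreover have "4 * (u * v) \<le> (u + v)\<^sup>2"
    using sum_squares_ge_zero[of "u - v" 0] by (simp add: power2_eq_square algebra_simps)
  ultimately show ?thesis by linarith
qed

lemma bilinear_pos_below_discriminant_bound:
  fixes k \<gamma> \<alpha> \<beta> s X Y :: real
  defines "D \<equiv> k * (3 * k * \<alpha> * \<beta> + \<alpha>\<^sup>2 * (k - \<gamma>))"
  assumes "0 < k" and "\<gamma> < k" and "0 \<le> X" and "0 \<le> Y" and "X + Y \<le> s"
    and pos: "0 < 3 * k * \<alpha> * \<beta> + \<alpha>\<^sup>2 * (k - \<gamma>)"
    and upper: "\<alpha>\<^sup>2 * s < k * \<alpha> + 3 * k * \<beta> + 2 * sqrt D"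
  shows "0 < k * (k - \<gamma>) + k * \<alpha> * X + 3 * k * \<beta> * Y - \<alpha>\<^sup>2 * X * Y"
proof -
  have "\<alpha> \<noteq> 0"
    using pos by auto
  then have "0 < \<alpha>\<^sup>2" by simp
  have "0 < D"
    unfolding D_def using assms by simp
  define u where "u = \<alpha>\<^sup>2 * X - 3 * k * \<beta>"
  define v where "v = \<alpha>\<^sup>2 * Y - k * \<alpha>"
  have scaled: "\<alpha>\<^sup>2 * (k * (k - \<gamma>) + k * \<alpha> * X + 3 * k * \<beta> * Y - \<alpha>\<^sup>2 * X * Y) = D - u * v"
    unfolding u_def v_def D_def by (simp add: power2_eq_square algebra_simps)
  have "u * v < D"
  proof -
    consider "u * v \<le> 0" | "0 < u" "0 < v" | "u < 0" "v < 0"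
      by (metis linorder_not_le mult_le_0_iff order_less_imp_le)
    then show ?thesis
    proof cases
      case 1
      then show ?thesis using \<open>0 < D\<close> by linarith
    next
      case 2
      have "\<alpha>\<^sup>2 * (X + Y) \<le> \<alpha>\<^sup>2 * s"
        using \<open>X + Y \<le> s\<close> by (simp add: mult_left_mono)
      then have "u + v < 2 * sqrt D"
        using upper unfolding u_def v_def by (simp add: distrib_left)
      with 2 show ?thesis
        by (rule mult_lt_of_add_lt_two_sqrt)
    next
      case 3
      have "- u \<le> 3 * k * \<beta>" and "- v \<le> k * \<alpha>"
        unfolding u_def v_def using assms by simp_all
      then have "(- u) * (- v) \<le> (3 * k * \<beta>) * (k * \<alpha>)"
        using 3 by (intro mult_mono) linarith+
      then have "u * v \<le> (3 * k * \<beta>) * (k * \<alpha>)"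
        by simp
      also have "\<dots> < D"
      proof -
        have "D = (3 * k * \<beta>) * (k * \<alpha>) + \<alpha>\<^sup>2 * (k * (k - \<gamma>))"
          unfolding D_def by (simp add: algebra_simps)
        moreover have "0 < \<alpha>\<^sup>2 * (k * (k - \<gamma>))"
          using \<open>0 < \<alpha>\<^sup>2\<close> assms by simp
        ultimately show ?thesis by linarith
      qed
      finally show ?thesis .
    qed
  qed
  then have "0 < \<alpha>\<^sup>2 * (k * (k - \<gamma>) + k * \<alpha> * X + 3 * k * \<beta> * Y - \<alpha>\<^sup>2 * X * Y)"
    using scaled by linarith
  then show ?thesis
    using \<open>0 < \<alpha>\<^sup>2\<close> by (simp add: zero_less_mult_iff)
qed

lemma gfun_eq_bilinear:
  "gfun \<alpha> \<beta> \<gamma> c a x y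
     = (c * a) * (c * a - \<gamma>) + (c * a) * \<alpha> * x\<^sup>2 + 3 * (c * a) * \<beta> * y\<^sup>2 - \<alpha>\<^sup>2 * x\<^sup>2 * y\<^sup>2"
  by (simp add: gfun_def power2_eq_square algebra_simps)

lemma gfun_pos_if_alpha_zero:
  assumes "\<gamma> < c * a" and "0 < c * a" and disc: "x\<^sup>2 + y\<^sup>2 \<le> r\<^sup>2"
    and "3 * \<beta> * r\<^sup>2 > \<gamma> - c * a"
  shows "0 < gfun 0 \<beta> \<gamma> c a x y"
proof -
  have "y\<^sup>2 \<le> r\<^sup>2"
    using disc zero_le_power2[of x] by linarith
  then have "0 < (c * a - \<gamma>) + 3 * \<beta> * y\<^sup>2"
    using affine_pos_on_interval[of "c * a - \<gamma>" "3 * \<beta>" "r\<^sup>2" "y\<^sup>2"] assms by simp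
  then have "0 < (c * a) * ((c * a - \<gamma>) + 3 * \<beta> * y\<^sup>2)"
    using \<open>0 < c * a\<close> by simp
  then show ?thesis
    by (simp add: gfun_eq_bilinear algebra_simps)
qed

lemma gfun_pos_if_radius_le_x_bound:
  assumes "\<gamma> < c * a" and "0 < c * a" and "x\<^sup>2 + y\<^sup>2 \<le> r\<^sup>2" and "\<alpha> \<noteq> 0"
    and bound: "r\<^sup>2 \<le> (c*a*\<alpha> - 3*c*a*\<beta>) / \<alpha>\<^sup>2" and "3 * \<beta> * r\<^sup>2 > \<gamma> - c * a"
  shows "0 < gfun \<alpha> \<beta> \<gamma> c a x y"
proof -
  have "\<alpha>\<^sup>2 * r\<^sup>2 \<le> (c * a) * (\<alpha> - 3 * \<beta>)"
    using bound \<open>\<alpha> \<noteq> 0\<close> by (simp add: pos_le_divide_eq algebra_simps)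
  then show ?thesis
    using bilinear_pos_on_simplex[of "c * a" "c * a - \<gamma>" "x\<^sup>2" "y\<^sup>2" "r\<^sup>2" "\<alpha>\<^sup>2" \<alpha> "3 * \<beta>"] assms
    by (simp add: gfun_eq_bilinear algebra_simps)
qed

lemma gfun_pos_if_radius_le_y_bound:
  assumes "\<gamma> < c * a" and "0 < c * a" and "x\<^sup>2 + y\<^sup>2 \<le> r\<^sup>2" and "\<alpha> \<noteq> 0"
    and bound: "r\<^sup>2 \<le> (3*c*a*\<beta> - c*a*\<alpha>) / \<alpha>\<^sup>2" and "\<alpha> * r\<^sup>2 > \<gamma> - c * a"
  shows "0 < gfun \<alpha> \<beta> \<gamma> c a x y"
proof -
  have "\<alpha>\<^sup>2 * r\<^sup>2 \<le> (c * a) * (3 * \<beta> - \<alpha>)"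
    using bound \<open>\<alpha> \<noteq> 0\<close> by (simp add: pos_le_divide_eq algebra_simps)
  then show ?thesis
    using bilinear_pos_on_simplex[of "c * a" "c * a - \<gamma>" "y\<^sup>2" "x\<^sup>2" "r\<^sup>2" "\<alpha>\<^sup>2" "3 * \<beta>" \<alpha>] assms
    by (simp add: gfun_eq_bilinear algebra_simps)
qed

lemma gfun_pos_if_radius_below_root:
  assumes "\<gamma> < c * a" and "0 < c * a" and "x\<^sup>2 + y\<^sup>2 \<le> r\<^sup>2"
    and pos: "3*c*a*\<alpha>*\<beta> + \<alpha>\<^sup>2 * (c*a - \<gamma>) > 0"
    and upper: "r\<^sup>2 < (c*a*\<alpha> + 3*c*a*\<beta> + 2 * sqrt (3*c\<^sup>2*a\<^sup>2*\<alpha>*\<beta> + \<alpha>\<^sup>2*c*a*(c*a - \<gamma>))) / \<alpha>\<^sup>2"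
  shows "0 < gfun \<alpha> \<beta> \<gamma> c a x y"
proof -
  define k where "k = c * a"
  have "\<alpha> \<noteq> 0"
    using pos by auto
  have discr: "3*c\<^sup>2*a\<^sup>2*\<alpha>*\<beta> + \<alpha>\<^sup>2*c*a*(c*a - \<gamma>) = k * (3 * k * \<alpha> * \<beta> + \<alpha>\<^sup>2 * (k - \<gamma>))"
    and linear_terms: "c*a*\<alpha> = k * \<alpha>" "3*c*a*\<beta> = 3 * k * \<beta>"
    by (simp_all add: k_def power2_eq_square algebra_simps)
  then have "\<alpha>\<^sup>2 * r\<^sup>2 < k * \<alpha> + 3 * k * \<beta> + 2 * sqrt (k * (3 * k * \<alpha> * \<beta> + \<alpha>\<^sup>2 * (k - \<gamma>)))"
    using upper \<open>\<alpha> \<noteq> 0\<close> unfolding discr linear_terms by (simp add: pos_less_divide_eq mult.commute)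
  then show ?thesis
    using bilinear_pos_below_discriminant_bound[of k \<gamma> "x\<^sup>2" "y\<^sup>2" "r\<^sup>2" \<alpha> \<beta>] assms
    by (simp add: gfun_eq_bilinear k_def algebra_simps)
qed

theorem lemma4p7:
  fixes \<alpha> \<beta> \<gamma> c a r :: real
  assumes hca: "c * a > max \<gamma> 0"
    and hr: "r > 0"
    and cases:
      "(\<alpha> = 0 \<and> 3 * \<beta> * r^2 > \<gamma> - c * a)
     \<or> (\<alpha> \<noteq> 0 \<and> \<alpha> > 3 * \<beta> \<and> r^2 \<le> (c*a*\<alpha> - 3*c*a*\<beta>) / \<alpha>^2 \<and> 3 * \<beta> * r^2 > \<gamma> - c * a)
     \<or> (\<alpha> \<noteq> 0 \<and> \<alpha> < 3 * \<beta> \<and> r^2 \<le> (3*c*a*\<beta> - c*a*\<alpha>) / \<alpha>^2 \<and> \<alpha> * r^2 > \<gamma> - c * a)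
     \<or> (3*c*a*\<alpha>*\<beta> + \<alpha>^2 * (c*a - \<gamma>) > 0
        \<and> r^2 \<ge> max ((c*a*\<alpha> - 3*c*a*\<beta>) / \<alpha>^2) ((3*c*a*\<beta> - c*a*\<alpha>) / \<alpha>^2)
        \<and> (c*a*\<alpha> + 3*c*a*\<beta> - 2 * sqrt (3*c^2*a^2*\<alpha>*\<beta> + \<alpha>^2*c*a*(c*a - \<gamma>))) / \<alpha>^2 < r^2
        \<and> r^2 < (c*a*\<alpha> + 3*c*a*\<beta> + 2 * sqrt (3*c^2*a^2*\<alpha>*\<beta> + \<alpha>^2*c*a*(c*a - \<gamma>))) / \<alpha>^2)"
  shows "Rset r \<subseteq> Cset \<alpha> \<beta> \<gamma> c a"
proof
  fix p assume "p \<in> Rset r"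
  then obtain x y where p: "p = (x, y)" and disc: "x\<^sup>2 + y\<^sup>2 \<le> r\<^sup>2"
    by (auto simp: Rset_def)
  have "\<gamma> < c * a" and "0 < c * a"
    using hca by simp_all
  with disc cases have "0 < gfun \<alpha> \<beta> \<gamma> c a x y"
    by (elim disjE conjE) (simp_all add: gfun_pos_if_alpha_zero gfun_pos_if_radius_le_x_bound
        gfun_pos_if_radius_le_y_bound gfun_pos_if_radius_below_root)
  then show "p \<in> Cset \<alpha> \<beta> \<gamma> c a"
    by (simp add: Cset_def p)
qed

end
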